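(* Let $|\psi\rangle\in\mathcal H_A\otimes\mathcal H_{A'}\otimes\mathcal H_B\otimes\mathcal H_{B'}$ be an embedding of a primitive $P_{X,Y}$. Then $$\Delta_\psi(P_{X,Y})=S(X;BB')-I(X;Y)=S(AA';Y)-I(X;Y).$$
   Context: A primitive is a joint distribution $P_{X,Y}$ on finite sets $\mathcal X\times\mathcal Y$. $\mathcal H_A,\mathcal H_B$ have computational orthonormal bases indexed by $\mathcal X$ and $\mathcal Y$; $\mathcal H_{A'},\mathcal H_{B'}$ are finite-dimensional (possibly trivial) work spaces of Alice and Bob. For a pure state $|\psi\rangle$ on $AA'BB'$, $X$ (resp. $Y$) denotes the outcome of measuring $A$ (resp. $B$) in the computational basis; entropic quantities are evaluated on the state obtained from $|\psi\rangle\langle\psi|$ by measuring exactly the registers named by $X$ or $Y$ and tracing out registers not mentioned (e.g. $S(X;BB')$: measure $A$, trace out $A'$, keep $BB'$ quantum; $S(AA';Y)$: measure $B$, trace out $B'$, keep $AA'$; $S(X;YB')$: measure $A,B$, trace out $A'$). Here $S(P;Q)=S(P)+S(Q)-S(PQ)$ with $S$ the von Neumann entropy, and $I(X;Y)$ is Shannon mutual information. $|\psi\rangle$ is an embedding of $P_{X,Y}$ if measuring $A$ and $B$ in the computational basis yields $(X,Y)$ distributed as $P_{X,Y}$ and $S(X;YB')=S(XA';Y)=I(X;Y)$. Its leakage is $\Delta_\psi(P_{X,Y}):=\max\{S(X;BB')-I(X;Y),\,S(AA';Y)-I(X;Y)\}$. *)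

theory Defs
  imports "Jordan_Normal_Form.Char_Poly" "HOL-Library.Multiset"
begin

definition eigvals_mset :: "complex mat \<Rightarrow> complex multiset" where
  "eigvals_mset A = (THE M. char_poly A = (\<Prod>a\<in>#M. [:- a, 1:]))"

definition eta :: "real \<Rightarrow> real" where
  "eta t = (if t \<le> 0 then 0 else - t * log 2 t)"

definition vn_entropy :: "complex mat \<Rightarrow> real" where
  "vn_entropy \<rho> = (\<Sum>e\<in>#eigvals_mset \<rho>. eta (Re e))"

text \<open>Entropy of an operator given as a function on a finite index set I
  (via an arbitrary enumeration of I; the result does not depend on it).\<close>
definition op_entropy :: "'i set \<Rightarrow> ('i \<Rightarrow> 'i \<Rightarrow> complex) \<Rightarrow> real" where
  "op_entropy I f = (let es = (SOME es. distinct es \<and> set es = I) in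
     vn_entropy (mat (length es) (length es) (\<lambda>(i,j). f (es ! i) (es ! j))))"

text \<open>A pure state on AA'BB' is a function psi on index lists [x,a,y,b] with
  x < d!0, a < d!1, y < d!2, b < d!3. Each register is either measured in the
  computational basis (Meas), kept quantum (Keep) or traced out (Tr).\<close>
datatype regmode = Meas | Keep | Tr

definition conf :: "nat list \<Rightarrow> regmode list \<Rightarrow> nat list set" where
  "conf d m = {c. length c = 4 \<and> (\<forall>r<4. if m ! r = Tr then c ! r = 0 else c ! r < d ! r)}"

definition full_conf :: "nat list \<Rightarrow> nat list set" where
  "full_conf d = conf d [Keep, Keep, Keep, Keep]"

definition agree :: "regmode list \<Rightarrow> nat list \<Rightarrow> nat list \<Rightarrow> bool" where
  "agree m c u = (\<forall>r<4. m ! r \<noteq> Tr \<longrightarrow> u ! r = c ! r)"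

text \<open>Matrix entries of the state obtained from |psi><psi| by tracing out the Tr registers
  and measuring (dephasing) the Meas registers.\<close>
definition reduced :: "(nat list \<Rightarrow> complex) \<Rightarrow> nat list \<Rightarrow> regmode list \<Rightarrow> nat list \<Rightarrow> nat list \<Rightarrow> complex" where
  "reduced \<psi> d m c c' =
     (if \<exists>r<4. m ! r = Meas \<and> c ! r \<noteq> c' ! r then 0
      else (\<Sum>u\<in>full_conf d. \<Sum>u'\<in>full_conf d.
              if agree m c u \<and> agree m c' u' \<and> (\<forall>r<4. m ! r = Tr \<longrightarrow> u ! r = u' ! r)
              then \<psi> u * cnj (\<psi> u') else 0))"

definition S_of :: "(nat list \<Rightarrow> complex) \<Rightarrow> nat list \<Rightarrow> regmode list \<Rightarrow> real" where
  "S_of \<psi> d m = op_entropy (conf d m) (reduced \<psi> d m)"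

definition mjoin :: "regmode \<Rightarrow> regmode \<Rightarrow> regmode" where
  "mjoin p q = (if p = Tr then q else p)"

definition q_mi :: "(nat list \<Rightarrow> complex) \<Rightarrow> nat list \<Rightarrow> regmode list \<Rightarrow> regmode list \<Rightarrow> real" where
  "q_mi \<psi> d m1 m2 = S_of \<psi> d m1 + S_of \<psi> d m2 - S_of \<psi> d (map2 mjoin m1 m2)"

definition "mX = [Meas, Tr, Tr, Tr]"
definition "mY = [Tr, Tr, Meas, Tr]"
definition "mBB' = [Tr, Tr, Keep, Keep]"
definition "mAA' = [Keep, Keep, Tr, Tr]"
definition "mYB' = [Tr, Tr, Meas, Keep]"
definition "mXA' = [Meas, Keep, Tr, Tr]"

definition shannon_mi :: "nat \<Rightarrow> nat \<Rightarrow> (nat \<Rightarrow> nat \<Rightarrow> real) \<Rightarrow> real" where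
  "shannon_mi nX nY P =
     (\<Sum>x<nX. eta (\<Sum>y<nY. P x y)) + (\<Sum>y<nY. eta (\<Sum>x<nX. P x y))
     - (\<Sum>x<nX. \<Sum>y<nY. eta (P x y))"

definition is_pure_state :: "nat list \<Rightarrow> (nat list \<Rightarrow> complex) \<Rightarrow> bool" where
  "is_pure_state d \<psi> = (length d = 4 \<and> (\<forall>r<4. d ! r \<ge> 1) \<and>
       (\<Sum>u\<in>full_conf d. (cmod (\<psi> u))\<^sup>2) = 1)"

definition is_primitive :: "nat \<Rightarrow> nat \<Rightarrow> (nat \<Rightarrow> nat \<Rightarrow> real) \<Rightarrow> bool" where
  "is_primitive nX nY P = (nX \<ge> 1 \<and> nY \<ge> 1 \<and> (\<forall>x<nX. \<forall>y<nY. P x y \<ge> 0) \<and>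
       (\<Sum>x<nX. \<Sum>y<nY. P x y) = 1)"

definition is_embedding :: "nat \<Rightarrow> nat \<Rightarrow> (nat \<Rightarrow> nat \<Rightarrow> real) \<Rightarrow> nat list \<Rightarrow> (nat list \<Rightarrow> complex) \<Rightarrow> bool" where
  "is_embedding nX nY P d \<psi> =
     (is_pure_state d \<psi> \<and> d ! 0 = nX \<and> d ! 2 = nY \<and>
      (\<forall>x<nX. \<forall>y<nY. P x y = (\<Sum>a<d ! 1. \<Sum>b<d ! 3. (cmod (\<psi> [x, a, y, b]))\<^sup>2)) \<and>
      q_mi \<psi> d mX mYB' = shannon_mi nX nY P \<and>
      q_mi \<psi> d mXA' mY = shannon_mi nX nY P)"

definition leakage :: "nat \<Rightarrow> nat \<Rightarrow> (nat \<Rightarrow> nat \<Rightarrow> real) \<Rightarrow> nat list \<Rightarrow> (nat list \<Rightarrow> complex) \<Rightarrow> real" where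
  "leakage nX nY P d \<psi> =
     max (q_mi \<psi> d mX mBB' - shannon_mi nX nY P) (q_mi \<psi> d mAA' mY - shannon_mi nX nY P)"

end

theory Submission
  imports Defs
begin

text \<open>If every register is either measured on both sides, or kept on exactly one side and traced
  out on the other, the two reduced states of a pure state are \<open>G G\<^sup>\<dagger>\<close> and
  \<open>(G\<^sup>\<dagger> G)\<^sup>T\<close> for one and the same amplitude matrix \<open>G\<close> (a Schmidt decomposition
  relative to the measured registers). By Sylvester's identity
  \<open>X\<^sup>m \<chi>(G H) = X\<^sup>n \<chi>(H G)\<close> they have the same nonzero eigenvalues, hence the same
  entropy. This gives \<open>S(BB') = S(AA')\<close>, \<open>S(XBB') = S(XA')\<close>, \<open>S(AA'Y) = S(YB')\<close> and
  \<open>S(XYB') = S(XA'Y)\<close>, and with them the two embedding equations turn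
  \<open>S(X;BB')\<close> into \<open>S(AA';Y)\<close>.\<close>

lemma proots_prod_mset_linear_factors:
  "proots (\<Prod>a\<in>#M. [:- a, 1:]) = (M :: 'a :: idom multiset)"
proof (induction M)
  case (add x M)
  have "(\<Prod>a\<in>#M. [:- a, 1:]) \<noteq> 0"
    by auto
  then have "proots ([:- x, 1:] * (\<Prod>a\<in>#M. [:- a, 1:])) = {#x#} + M"
    using add.IH by (subst proots_mult) simp_all
  then show ?case by simp
qed simp

lemma eigvals_mset_eq_proots:
  assumes "(A :: complex mat) \<in> carrier_mat n n"
  shows "eigvals_mset A = proots (char_poly A)"
proof -
  obtain as where "char_poly A = (\<Prod>a\<leftarrow>as. [:- a, 1:])"
    using char_poly_factorized[OF assms] by blast
  then have cp: "char_poly A = (\<Prod>a\<in>#mset as. [:- a, 1:])"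
    by (simp add: prod_mset_prod_list flip: mset_map)
  have "eigvals_mset A = mset as"
    unfolding eigvals_mset_def
    by (rule the1_equality) (metis cp proots_prod_mset_linear_factors, rule cp)
  then show ?thesis using cp proots_prod_mset_linear_factors by metis
qed

interpretation const_poly: comm_ring_hom "\<lambda>x :: 'a :: comm_ring_1. [:x:]"
  by unfold_locales (auto simp: one_pCons)

lemma char_poly_matrix_eq_smult_minus:
  assumes "A \<in> carrier_mat n n"
  shows "char_poly_matrix A = [:0, 1:] \<cdot>\<^sub>m 1\<^sub>m n - map_mat (\<lambda>x. [:x:]) A"
  unfolding char_poly_matrix_def
proof (rule eq_matI)
  fix i j assume "i < dim_row ([:0, 1:] \<cdot>\<^sub>m 1\<^sub>m n - map_mat (\<lambda>x. [:x:]) A)"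
    and "j < dim_col ([:0, 1:] \<cdot>\<^sub>m 1\<^sub>m n - map_mat (\<lambda>x. [:x:]) A)"
  with assms show "([:0, 1:] \<cdot>\<^sub>m 1\<^sub>m (dim_row A) + map_mat (\<lambda>a. [:- a:]) A) $$ (i, j)
      = ([:0, 1:] \<cdot>\<^sub>m 1\<^sub>m n - map_mat (\<lambda>x. [:x:]) A) $$ (i, j)"
    by (simp only: index_add_mat index_minus_mat index_smult_mat index_map_mat index_one_mat
        carrier_matD dim_row_mat dim_col_mat diff_conv_add_uminus) simp
qed (use assms in auto)

lemma char_poly_mult_commute:
  fixes A B :: "'a :: idom mat"
  assumes A: "A \<in> carrier_mat n m" and B: "B \<in> carrier_mat m n"
  shows "[:0, 1:] ^ m * char_poly (A * B) = [:0, 1:] ^ n * char_poly (B * A)"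
proof -
  define X :: "'a poly" where "X = [:0, 1:]"
  define a where "a = map_mat (\<lambda>x. [:x:]) A"
  define b where "b = map_mat (\<lambda>x. [:x:]) B"
  have a: "a \<in> carrier_mat n m" and b: "b \<in> carrier_mat m n"
    using A B by (auto simp: a_def b_def)
  have Xn: "X \<cdot>\<^sub>m 1\<^sub>m n \<in> carrier_mat n n" and Xm: "X \<cdot>\<^sub>m 1\<^sub>m m \<in> carrier_mat m m"
    by auto
  have ab: "char_poly_matrix (A * B) = X \<cdot>\<^sub>m 1\<^sub>m n - a * b"
    unfolding a_def b_def X_def
    using A B const_poly.mat_hom_mult[OF A B] char_poly_matrix_eq_smult_minus[of "A * B" n] by auto
  have ba: "char_poly_matrix (B * A) = X \<cdot>\<^sub>m 1\<^sub>m m - b * a"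
    unfolding a_def b_def X_def
    using A B const_poly.mat_hom_mult[OF B A] char_poly_matrix_eq_smult_minus[of "B * A" m] by auto
  text \<open>\<open>L N\<close> and \<open>N R\<close> are block triangular, with the two characteristic matrices on
    their diagonals.\<close>
  define N where "N = four_block_mat (X \<cdot>\<^sub>m 1\<^sub>m n) a b (1\<^sub>m m)"
  define L where "L = four_block_mat (1\<^sub>m n) (0\<^sub>m n m) (- b) (X \<cdot>\<^sub>m 1\<^sub>m m)"
  define R where "R = four_block_mat (1\<^sub>m n) (0\<^sub>m n m) (- b) (1\<^sub>m m)"
  have N: "N \<in> carrier_mat (n + m) (n + m)" and L: "L \<in> carrier_mat (n + m) (n + m)"
    and R: "R \<in> carrier_mat (n + m) (n + m)"
    using a b by (auto simp: N_def L_def R_def)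
  have LN: "L * N = four_block_mat (X \<cdot>\<^sub>m 1\<^sub>m n) a (0\<^sub>m m n) (X \<cdot>\<^sub>m 1\<^sub>m m - b * a)"
    unfolding L_def N_def
  proof (subst mult_four_block_mat[OF one_carrier_mat zero_carrier_mat uminus_carrier_mat[OF b]
        Xm Xn a b one_carrier_mat], rule cong_four_block_mat)
    show "1\<^sub>m n * (X \<cdot>\<^sub>m 1\<^sub>m n) + 0\<^sub>m n m * b = X \<cdot>\<^sub>m 1\<^sub>m n"
      using b by (simp add: left_mult_zero_mat[OF b])
    show "1\<^sub>m n * a + 0\<^sub>m n m * 1\<^sub>m m = a"
      using a by simp
    have "b * (X \<cdot>\<^sub>m 1\<^sub>m n) = X \<cdot>\<^sub>m b" and "(X \<cdot>\<^sub>m 1\<^sub>m m) * b = X \<cdot>\<^sub>m b"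
      using b by (simp_all add: mult_smult_distrib[OF b one_carrier_mat]
          mult_smult_assoc_mat[OF one_carrier_mat b])
    then show "- b * (X \<cdot>\<^sub>m 1\<^sub>m n) + X \<cdot>\<^sub>m 1\<^sub>m m * b = 0\<^sub>m m n"
      using b by (simp add: uminus_l_inv_mat[of "X \<cdot>\<^sub>m b" m n])
    show "- b * a + X \<cdot>\<^sub>m 1\<^sub>m m * 1\<^sub>m m = X \<cdot>\<^sub>m 1\<^sub>m m - b * a"
      using a b comm_add_mat[of "- (b * a)" m m "X \<cdot>\<^sub>m 1\<^sub>m m"]
        add_uminus_minus_mat[OF Xm, of "b * a"] uminus_mult_left_mat[of b a]
      by simp
  qed
  have NR: "N * R = four_block_mat (X \<cdot>\<^sub>m 1\<^sub>m n - a * b) a (0\<^sub>m m n) (1\<^sub>m m)"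
    unfolding R_def N_def
  proof (subst mult_four_block_mat[OF Xn a b one_carrier_mat one_carrier_mat zero_carrier_mat
        uminus_carrier_mat[OF b] one_carrier_mat], rule cong_four_block_mat)
    show "X \<cdot>\<^sub>m 1\<^sub>m n * 1\<^sub>m n + a * - b = X \<cdot>\<^sub>m 1\<^sub>m n - a * b"
      using a b add_uminus_minus_mat[OF Xn, of "a * b"] uminus_mult_right_mat[of a b] by simp
    show "X \<cdot>\<^sub>m 1\<^sub>m n * 0\<^sub>m n m + a * 1\<^sub>m m = a"
      using a by (simp add: right_mult_zero_mat[OF Xn])
    show "b * 1\<^sub>m n + 1\<^sub>m m * - b = 0\<^sub>m m n"
      using b add_uminus_minus_mat[OF b b] by simp
    show "b * 0\<^sub>m n m + 1\<^sub>m m * 1\<^sub>m m = 1\<^sub>m m"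
      using b by (simp add: right_mult_zero_mat[OF b])
  qed
  have "det L = X ^ m"
    unfolding L_def by (subst det_four_block_mat_upper_right_zero[of _ n _ m]) (use b in auto)
  moreover have "det R = 1"
    unfolding R_def by (subst det_four_block_mat_upper_right_zero[of _ n _ m]) (use b in auto)
  moreover have "det (L * N) = X ^ n * char_poly (B * A)"
    unfolding LN char_poly_def ba
    by (subst det_four_block_mat_lower_left_zero[of _ n _ m]) (use a b in auto)
  moreover have "det (N * R) = char_poly (A * B)"
    unfolding NR char_poly_def ab
    by (subst det_four_block_mat_lower_left_zero[of _ n _ m]) (use a b in auto)
  ultimately show ?thesis
    using det_mult[OF L N] det_mult[OF N R] unfolding X_def by (simp add: mult.commute)
qed

lemma vn_entropy_mult_commute:
  fixes A B :: "complex mat"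
  assumes A: "A \<in> carrier_mat n m" and B: "B \<in> carrier_mat m n"
  shows "vn_entropy (A * B) = vn_entropy (B * A)"
proof -
  have AB: "A * B \<in> carrier_mat n n" and BA: "B * A \<in> carrier_mat m m"
    using A B by auto
  have "char_poly (A * B) \<noteq> 0" and "char_poly (B * A) \<noteq> 0"
    using degree_monic_char_poly[OF AB] degree_monic_char_poly[OF BA] by auto
  moreover have "proots [:0, 1 :: complex:] = {#0#}"
    using proots_linear_factor[of "0 :: complex"] by simp
  ultimately have "replicate_mset m 0 + eigvals_mset (A * B) = replicate_mset n 0 + eigvals_mset (B * A)"
    using arg_cong[OF char_poly_mult_commute[OF A B], of proots]
    by (simp add: proots_mult proots_power eigvals_mset_eq_proots[OF AB] eigvals_mset_eq_proots[OF BA])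
  moreover have "(\<Sum>e\<in># replicate_mset k 0 + M. eta (Re e)) = (\<Sum>e\<in>#M. eta (Re e))" for k M
    by (simp add: eta_def)
  ultimately show ?thesis
    unfolding vn_entropy_def by metis
qed

lemma vn_entropy_transpose:
  assumes "(A :: complex mat) \<in> carrier_mat n n"
  shows "vn_entropy (transpose_mat A) = vn_entropy A"
  using assms by (simp add: vn_entropy_def eigvals_mset_eq_proots)

lemma all_less_four: "(\<forall>r < 4. P (r :: nat)) \<longleftrightarrow> P 0 \<and> P 1 \<and> P 2 \<and> P 3"
  by (auto simp: less_Suc_eq numeral_eq_Suc)

lemma mem_conf_iff:
  "c \<in> conf d m \<longleftrightarrow> length c = 4 \<and> (\<forall>r < 4. if m ! r = Tr then c ! r = 0 else c ! r < d ! r)"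
  unfolding conf_def by simp

lemma mem_full_conf_iff: "u \<in> full_conf d \<longleftrightarrow> length u = 4 \<and> (\<forall>r < 4. u ! r < d ! r)"
  unfolding full_conf_def mem_conf_iff by (simp add: all_less_four)

lemma finite_conf: "finite (conf d m)"
proof (rule finite_subset)
  let ?B = "d ! 0 + d ! 1 + d ! 2 + d ! 3 + 1"
  have "\<forall>r < 4. d ! r < ?B"
    by (simp add: all_less_four)
  then show "conf d m \<subseteq> {c. set c \<subseteq> {..<?B} \<and> length c = 4}"
    by (fastforce simp: mem_conf_iff in_set_conv_nth split: if_splits)
  show "finite {c. set c \<subseteq> {..<?B} \<and> length c = 4}"
    by (rule finite_lists_length_eq) simp
qed

lemma op_entropy_via_enumeration:
  assumes "finite I"
  obtains es where "distinct es" "set es = I"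
    and "op_entropy I f = vn_entropy (mat (length es) (length es) (\<lambda>(i, j). f (es ! i) (es ! j)))"
proof -
  have "\<exists>es. distinct es \<and> set es = I"
    using finite_distinct_list[OF assms] by blast
  from someI_ex[OF this] that show ?thesis
    unfolding op_entropy_def Let_def by blast
qed

lemma sum_distinct_list_nth:
  assumes "distinct es"
  shows "(\<Sum>k\<in>{0..<length es}. f (es ! k)) = sum f (set es)"
  using sum.reindex_bij_betw[OF bij_betw_nth[OF assms refl refl], of f]
  by (simp add: atLeast0LessThan)

definition complementary_modes :: "regmode list \<Rightarrow> regmode list \<Rightarrow> bool" where
  "complementary_modes m1 m2 \<longleftrightarrow> (\<forall>r < 4. (m1 ! r = Meas \<and> m2 ! r = Meas)
     \<or> (m1 ! r = Keep \<and> m2 ! r = Tr) \<or> (m1 ! r = Tr \<and> m2 ! r = Keep))"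

definition merge_conf :: "regmode list \<Rightarrow> nat list \<Rightarrow> nat list \<Rightarrow> nat list" where
  "merge_conf m c c' = map (\<lambda>r. if m ! r = Tr then c' ! r else c ! r) [0..<4]"

definition agree_on_meas :: "regmode list \<Rightarrow> nat list \<Rightarrow> nat list \<Rightarrow> bool" where
  "agree_on_meas m c c' \<longleftrightarrow> (\<forall>r < 4. m ! r = Meas \<longrightarrow> c ! r = c' ! r)"

text \<open>The amplitude matrix \<open>G\<close> with \<open>reduced \<psi> d m = G G\<^sup>\<dagger>\<close>: rows are indexed by the
  configurations of \<open>m\<close>, columns by those of a complementary pattern, which fill in the
  traced-out registers.\<close>
definition amplitude :: "(nat list \<Rightarrow> complex) \<Rightarrow> regmode list \<Rightarrow> nat list \<Rightarrow> nat list \<Rightarrow> complex" where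
  "amplitude \<psi> m c c' = (if agree_on_meas m c c' then \<psi> (merge_conf m c c') else 0)"

lemma length_merge_conf [simp]: "length (merge_conf m c c') = 4"
  by (simp add: merge_conf_def)

lemma nth_merge_conf [simp]: "r < 4 \<Longrightarrow> merge_conf m c c' ! r = (if m ! r = Tr then c' ! r else c ! r)"
  by (simp add: merge_conf_def)

lemma complementary_modes_sym: "complementary_modes m1 m2 \<Longrightarrow> complementary_modes m2 m1"
  unfolding complementary_modes_def by blast

lemma amplitude_swap:
  assumes "complementary_modes m1 m2"
  shows "amplitude \<psi> m2 c' c = amplitude \<psi> m1 c c'"
proof -
  have "agree_on_meas m2 c' c = agree_on_meas m1 c c'"
    using assms unfolding agree_on_meas_def complementary_modes_def by force
  moreover have "merge_conf m2 c' c = merge_conf m1 c c'" if "agree_on_meas m1 c c'"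
    by (rule nth_equalityI) (use assms that in \<open>auto simp: agree_on_meas_def complementary_modes_def\<close>)
  ultimately show ?thesis
    unfolding amplitude_def by auto
qed

lemma bij_betw_merge_conf_pairs:
  assumes cm: "complementary_modes m m'" and c: "c \<in> conf d m" and c': "c' \<in> conf d m"
    and cc': "agree_on_meas m c c'"
  shows "bij_betw (\<lambda>c2. (merge_conf m c c2, merge_conf m c' c2))
    {c2 \<in> conf d m'. agree_on_meas m c c2}
    {p \<in> full_conf d \<times> full_conf d. agree m c (fst p) \<and> agree m c' (snd p)
       \<and> (\<forall>r < 4. m ! r = Tr \<longrightarrow> fst p ! r = snd p ! r)}"
    (is "bij_betw ?h ?S ?T")
proof (rule bij_betw_imageI)
  show "inj_on ?h ?S"
  proof (rule inj_onI)
    fix x y assume x: "x \<in> ?S" and y: "y \<in> ?S" and xy: "?h x = ?h y"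
    show "x = y"
    proof (rule nth_equalityI)
      show "length x = length y"
        using x y by (simp add: mem_conf_iff)
      fix r assume "r < length x"
      then have r: "r < 4"
        using x by (simp add: mem_conf_iff)
      have "merge_conf m c x ! r = merge_conf m c y ! r"
        using xy by simp
      with cm r x y show "x ! r = y ! r"
        unfolding complementary_modes_def mem_conf_iff agree_on_meas_def
        by (cases "m ! r") auto
    qed
  qed
  have merged_in_full: "merge_conf m x c2 \<in> full_conf d" if "x \<in> conf d m" "c2 \<in> conf d m'" for x c2
    using cm that unfolding mem_full_conf_iff complementary_modes_def mem_conf_iff
    by (metis length_merge_conf nth_merge_conf regmode.distinct)
  show "?h ` ?S = ?T"
  proof (intro equalityI subsetI)
    fix p assume "p \<in> ?h ` ?S"
    with c c' cc' show "p \<in> ?T"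
      by (auto simp: agree_def agree_on_meas_def intro: merged_in_full)
  next
    fix p assume "p \<in> ?T"
    then obtain u u' where p: "p = (u, u')" and u: "u \<in> full_conf d" and u': "u' \<in> full_conf d"
      and ag: "agree m c u" "agree m c' u'" and tr: "\<forall>r < 4. m ! r = Tr \<longrightarrow> u ! r = u' ! r"
      by (cases p) auto
    text \<open>The column index records the traced-out part of \<open>u\<close>; it is \<open>0\<close> where \<open>m'\<close> traces
      out and copies \<open>c\<close> on measured registers.\<close>
    define c2 where "c2 = map (\<lambda>r. if m ! r = Tr then u ! r else if m ! r = Keep then 0 else c ! r) [0..<4]"
    have c2_nth: "c2 ! r = (if m ! r = Tr then u ! r else if m ! r = Keep then 0 else c ! r)" if "r < 4" for r
      using that by (simp add: c2_def)
    have "c2 \<in> conf d m'"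
      using cm c u c2_nth unfolding mem_conf_iff mem_full_conf_iff complementary_modes_def
      by (auto simp: c2_def)
    moreover have "agree_on_meas m c c2"
      by (simp add: agree_on_meas_def c2_nth)
    moreover have "merge_conf m c c2 = u" and "merge_conf m c' c2 = u'"
      using u u' ag tr c2_nth by (auto intro!: nth_equalityI simp: mem_full_conf_iff agree_def)
    ultimately show "p \<in> ?h ` ?S"
      unfolding p by force
  qed
qed

lemma reduced_eq_sum_amplitude:
  assumes cm: "complementary_modes m m'" and c: "c \<in> conf d m" and c': "c' \<in> conf d m"
  shows "reduced \<psi> d m c c' = (\<Sum>c2\<in>conf d m'. amplitude \<psi> m c c2 * cnj (amplitude \<psi> m c' c2))"
proof (cases "agree_on_meas m c c'")
  case False
  then have zero: "amplitude \<psi> m c c2 * cnj (amplitude \<psi> m c' c2) = 0" for c2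
    unfolding amplitude_def agree_on_meas_def by auto
  have "(\<Sum>c2\<in>conf d m'. amplitude \<psi> m c c2 * cnj (amplitude \<psi> m c' c2)) = 0"
    by (simp add: zero)
  with False show ?thesis
    unfolding reduced_def agree_on_meas_def by auto
next
  case True
  let ?F = "full_conf d"
  let ?Q = "\<lambda>u u'. agree m c u \<and> agree m c' u' \<and> (\<forall>r < 4. m ! r = Tr \<longrightarrow> u ! r = u' ! r)"
  have "reduced \<psi> d m c c' = (\<Sum>u\<in>?F. \<Sum>u'\<in>?F. if ?Q u u' then \<psi> u * cnj (\<psi> u') else 0)"
    using True unfolding reduced_def agree_on_meas_def by auto
  also have "\<dots> = (\<Sum>p\<in>?F \<times> ?F. if ?Q (fst p) (snd p) then \<psi> (fst p) * cnj (\<psi> (snd p)) else 0)"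
    by (simp add: sum.cartesian_product case_prod_beta)
  also have "\<dots> = (\<Sum>p\<in>{p \<in> ?F \<times> ?F. ?Q (fst p) (snd p)}. \<psi> (fst p) * cnj (\<psi> (snd p)))"
    by (rule sum.inter_filter[symmetric]) (simp add: full_conf_def finite_conf)
  also have "\<dots> = (\<Sum>c2\<in>{c2 \<in> conf d m'. agree_on_meas m c c2}.
      \<psi> (merge_conf m c c2) * cnj (\<psi> (merge_conf m c' c2)))"
    using sum.reindex_bij_betw[OF bij_betw_merge_conf_pairs[OF cm c c' True],
        of "\<lambda>p. \<psi> (fst p) * cnj (\<psi> (snd p))"]
    by simp
  also have "\<dots> = (\<Sum>c2\<in>conf d m'. amplitude \<psi> m c c2 * cnj (amplitude \<psi> m c' c2))"
  proof -
    have "agree_on_meas m c' c2 = agree_on_meas m c c2" for c2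
      using True by (auto simp: agree_on_meas_def)
    then show ?thesis
      by (simp add: sum.inter_filter finite_conf amplitude_def, intro sum.cong) auto
  qed
  finally show ?thesis .
qed

lemma S_of_complementary:
  assumes cm: "complementary_modes m1 m2"
  shows "S_of \<psi> d m1 = S_of \<psi> d m2"
proof -
  obtain es1 where es1: "distinct es1" "set es1 = conf d m1"
    and S1: "S_of \<psi> d m1 = vn_entropy (mat (length es1) (length es1)
      (\<lambda>(i, j). reduced \<psi> d m1 (es1 ! i) (es1 ! j)))"
    using op_entropy_via_enumeration[OF finite_conf] unfolding S_of_def by blast
  obtain es2 where es2: "distinct es2" "set es2 = conf d m2"
    and S2: "S_of \<psi> d m2 = vn_entropy (mat (length es2) (length es2)
      (\<lambda>(i, j). reduced \<psi> d m2 (es2 ! i) (es2 ! j)))"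
    using op_entropy_via_enumeration[OF finite_conf] unfolding S_of_def by blast
  define n1 where "n1 = length es1"
  define n2 where "n2 = length es2"
  define G where "G = mat n1 n2 (\<lambda>(i, j). amplitude \<psi> m1 (es1 ! i) (es2 ! j))"
  define H where "H = mat n2 n1 (\<lambda>(j, i). cnj (amplitude \<psi> m1 (es1 ! i) (es2 ! j)))"
  have G: "G \<in> carrier_mat n1 n2" and H: "H \<in> carrier_mat n2 n1"
    by (simp_all add: G_def H_def)
  have "mat n1 n1 (\<lambda>(i, j). reduced \<psi> d m1 (es1 ! i) (es1 ! j)) = G * H"
  proof (rule eq_matI)
    fix i j assume "i < dim_row (G * H)" "j < dim_col (G * H)"
    then have ij: "i < n1" "j < n1"
      using G H by auto
    then have "es1 ! i \<in> conf d m1" "es1 ! j \<in> conf d m1"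
      by (simp_all add: n1_def flip: es1(2))
    have "(G * H) $$ (i, j) = (\<Sum>k\<in>{0..<n2}.
        amplitude \<psi> m1 (es1 ! i) (es2 ! k) * cnj (amplitude \<psi> m1 (es1 ! j) (es2 ! k)))"
      using ij by (simp add: G_def H_def scalar_prod_def)
    also have "\<dots> = (\<Sum>c2\<in>conf d m2. amplitude \<psi> m1 (es1 ! i) c2 * cnj (amplitude \<psi> m1 (es1 ! j) c2))"
      using sum_distinct_list_nth[OF es2(1),
          of "\<lambda>c2. amplitude \<psi> m1 (es1 ! i) c2 * cnj (amplitude \<psi> m1 (es1 ! j) c2)"]
      by (simp only: n2_def es2(2))
    also have "\<dots> = reduced \<psi> d m1 (es1 ! i) (es1 ! j)"
      by (rule reduced_eq_sum_amplitude[OF cm, symmetric]) fact+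
    finally show "mat n1 n1 (\<lambda>(i, j). reduced \<psi> d m1 (es1 ! i) (es1 ! j)) $$ (i, j) = (G * H) $$ (i, j)"
      using ij by simp
  qed (use G H in auto)
  moreover have "mat n2 n2 (\<lambda>(i, j). reduced \<psi> d m2 (es2 ! i) (es2 ! j)) = transpose_mat (H * G)"
  proof (rule eq_matI)
    fix i j assume "i < dim_row (transpose_mat (H * G))" "j < dim_col (transpose_mat (H * G))"
    then have ij: "i < n2" "j < n2"
      using G H by auto
    then have "es2 ! i \<in> conf d m2" "es2 ! j \<in> conf d m2"
      by (simp_all add: n2_def flip: es2(2))
    have "transpose_mat (H * G) $$ (i, j) = (\<Sum>k\<in>{0..<n1}.
        amplitude \<psi> m1 (es1 ! k) (es2 ! i) * cnj (amplitude \<psi> m1 (es1 ! k) (es2 ! j)))"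
      using ij by (simp add: G_def H_def scalar_prod_def mult.commute)
    also have "\<dots> = (\<Sum>c\<in>conf d m1. amplitude \<psi> m1 c (es2 ! i) * cnj (amplitude \<psi> m1 c (es2 ! j)))"
      using sum_distinct_list_nth[OF es1(1),
          of "\<lambda>c. amplitude \<psi> m1 c (es2 ! i) * cnj (amplitude \<psi> m1 c (es2 ! j))"]
      by (simp only: n1_def es1(2))
    also have "\<dots> = (\<Sum>c\<in>conf d m1. amplitude \<psi> m2 (es2 ! i) c * cnj (amplitude \<psi> m2 (es2 ! j) c))"
      by (simp add: amplitude_swap[OF cm])
    also have "\<dots> = reduced \<psi> d m2 (es2 ! i) (es2 ! j)"
      by (rule reduced_eq_sum_amplitude[OF complementary_modes_sym[OF cm], symmetric]) fact+
    finally show "mat n2 n2 (\<lambda>(i, j). reduced \<psi> d m2 (es2 ! i) (es2 ! j)) $$ (i, j)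
        = transpose_mat (H * G) $$ (i, j)"
      using ij by simp
  qed (use G H in auto)
  ultimately show ?thesis
    using S1 S2 G H vn_entropy_mult_commute[OF G H] vn_entropy_transpose[of "H * G" n2]
    by (simp add: n1_def n2_def)
qed

theorem lemma2:
  fixes nX nY :: nat and P :: "nat \<Rightarrow> nat \<Rightarrow> real"
    and d :: "nat list" and \<psi> :: "nat list \<Rightarrow> complex"
  assumes "is_primitive nX nY P"
    and "is_embedding nX nY P d \<psi>"
  shows "leakage nX nY P d \<psi> = q_mi \<psi> d mX mBB' - shannon_mi nX nY P
    \<and> leakage nX nY P d \<psi> = q_mi \<psi> d mAA' mY - shannon_mi nX nY P"
proof -
  have "S_of \<psi> d [Tr, Tr, Keep, Keep] = S_of \<psi> d [Keep, Keep, Tr, Tr]"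
    and "S_of \<psi> d [Meas, Tr, Keep, Keep] = S_of \<psi> d [Meas, Keep, Tr, Tr]"
    and "S_of \<psi> d [Keep, Keep, Meas, Tr] = S_of \<psi> d [Tr, Tr, Meas, Keep]"
    and "S_of \<psi> d [Meas, Tr, Meas, Keep] = S_of \<psi> d [Meas, Keep, Meas, Tr]"
    by (simp_all add: S_of_complementary complementary_modes_def all_less_four)
  moreover have "q_mi \<psi> d mX mYB' = q_mi \<psi> d mXA' mY"
    using assms(2) unfolding is_embedding_def by simp
  ultimately have "q_mi \<psi> d mX mBB' = q_mi \<psi> d mAA' mY"
    by (simp add: q_mi_def mX_def mY_def mBB'_def mAA'_def mYB'_def mXA'_def mjoin_def)
  then show ?thesis
    unfolding leakage_def by simp
qed

end
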